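(* Let $\mathcal{X}$ (with metric $d_{\mathcal X}$) and $\Theta$ be compact metric spaces and let $f_\theta:\mathcal{X}\to\mathbb{R}^p$, $\theta\in\Theta$, be functions such that for each $\theta$ the image $f_\theta(\mathcal{X})$ spans $\mathbb{R}^p$ and $(x,\theta)\mapsto f_\theta(x)$ is continuous on $\mathcal{X}\times\Theta$. Suppose $p\ge 2$. Let $n_{\rm st}\in\mathbb{N}$ and $x_1,\ldots,x_{n_{\rm st}}\in\mathcal{X}$ be such that $M(\xi_{n_{\rm st}},\theta)$ is positive definite for all $\theta\in\Theta$, where $\xi_n=\frac1n\sum_{i=1}^n\delta_{x_i}$. Let $(\theta_n)_{n\ge n_{\rm st}}$ be an arbitrary sequence in $\Theta$, and let $x_{n+1}$, $n\ge n_{\rm st}$, be defined recursively by $$x_{n+1}\in\arg\max_{x\in\mathcal{X}} f_{\theta_n}^{\mathsf T}(x)\,M^{-1}(\xi_n,\theta_n)\,f_{\theta_n}(x).$$ Then there exist $n_0\ge n_{\rm st}$, $\pi_0>0$ and $d_0>0$ such that for each $n\ge n_0$ there are subsets $S_{1,n},\ldots,S_{p,n}$ of $\mathcal{X}$ with $\xi_n(S_{j,n})\ge\pi_0$ and $\mathrm{diam}(S_{j,n})\le d_0$ for $1\le j\le p$, and $d_{\mathcal X}(S_{j,n},S_{k,n})\ge d_0$ for $1\le j<k\le p$.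
   Context: A design is a finitely supported probability measure on $\mathcal{X}$; $\delta_x$ is the point mass at $x$. The information matrix of a design $\xi$ at $\theta$ is $M(\xi,\theta)=\sum_{x\in\mathrm{supp}(\xi)}\xi(x)f_\theta(x)f_\theta^{\mathsf T}(x)$. For nonempty $S_1,S_2\subseteq\mathcal{X}$, $d_{\mathcal X}(S_1,S_2)=\inf\{d_{\mathcal X}(x,z):x\in S_1,z\in S_2\}$ and $\mathrm{diam}(S)=\sup\{d_{\mathcal X}(x,z):x,z\in S\}$. *)

theory Defs
  imports "HOL-Analysis.Analysis"
begin

text \<open>A design is a finitely supported probability measure on the design space,
represented by its probability mass function.\<close>

definition design_supp :: "('a \<Rightarrow> real) \<Rightarrow> 'a set" where
  "design_supp \<xi> = {x. \<xi> x \<noteq> 0}"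

definition is_design :: "'a set \<Rightarrow> ('a \<Rightarrow> real) \<Rightarrow> bool" where
  "is_design X \<xi> \<longleftrightarrow> finite (design_supp \<xi>) \<and> design_supp \<xi> \<subseteq> X
     \<and> (\<forall>x. \<xi> x \<ge> 0) \<and> sum \<xi> (design_supp \<xi>) = 1"

definition design_meas :: "('a \<Rightarrow> real) \<Rightarrow> 'a set \<Rightarrow> real" where
  "design_meas \<xi> S = sum \<xi> (design_supp \<xi> \<inter> S)"

definition outer :: "real^'p \<Rightarrow> real^'p^'p" where
  "outer v = (\<chi> i j. v $ i * v $ j)"

definition info_matrix :: "('b \<Rightarrow> 'a \<Rightarrow> real^'p) \<Rightarrow> ('a \<Rightarrow> real) \<Rightarrow> 'b \<Rightarrow> real^'p^'p" where
  "info_matrix f \<xi> \<theta> = (\<Sum>x\<in>design_supp \<xi>. \<xi> x *\<^sub>R outer (f \<theta> x))"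

definition emp_design :: "(nat \<Rightarrow> 'a) \<Rightarrow> nat \<Rightarrow> 'a \<Rightarrow> real" where
  "emp_design x n = (\<lambda>z. real (card {i\<in>{1..n}. x i = z}) / real n)"

definition pos_def :: "real^'p^'p \<Rightarrow> bool" where
  "pos_def A \<longleftrightarrow> transpose A = A \<and> (\<forall>v. v \<noteq> 0 \<longrightarrow> v \<bullet> (A *v v) > 0)"

end

theory Submission
  imports Defs
begin

(* Let M_n be the information matrix of xi_n at theta_n and d_n = f^T M_n^-1 f the sensitivity
   of the new point x_(n+1), which is maximal over X.  Compactness gives gamma > 0 such that
   every unit direction e has (e . f_theta z)^2 >= gamma at some z in X, and Cauchy-Schwarz for
   the form of M_n turns this into gamma <= d_n * e^T M_n e.  So d_n is large as soon as M_n has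
   a flat direction, and a large d_n forces x_(n+1) into a region carrying little design mass.
   If fewer than p points of X had all but a small fraction of the design mass near them, a
   direction orthogonal to their f-values would be flat for all n between m/2 and m, and the
   points x_(n+1) would keep landing in sparsely visited cells of a fixed finite cover, which is
   impossible for m/2 consecutive steps.  Hence a maximal 4r-separated family of heavy cells
   of a cover by r-balls has at least p members, which gives the sets S_j. *)

section \<open>Empirical designs\<close>

definition visits :: "(nat \<Rightarrow> 'a) \<Rightarrow> nat \<Rightarrow> 'a set \<Rightarrow> nat" where
  "visits x n S = card {i\<in>{1..n}. x i \<in> S}"

lemma visits_mono: "m \<le> n \<Longrightarrow> visits x m S \<le> visits x n S"
  unfolding visits_def by (rule card_mono) auto

lemma visits_le_sum_visits_cover:
  assumes "finite L" "\<And>i. 1 \<le> i \<Longrightarrow> i \<le> n \<Longrightarrow> x i \<in> S \<Longrightarrow> \<exists>c\<in>L. x i \<in> A c"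
  shows "visits x n S \<le> (\<Sum>c\<in>L. visits x n (A c))"
proof -
  have "{i\<in>{1..n}. x i \<in> S} \<subseteq> (\<Union>c\<in>L. {i\<in>{1..n}. x i \<in> A c})"
    using assms(2) by auto
  then have "visits x n S \<le> card (\<Union>c\<in>L. {i\<in>{1..n}. x i \<in> A c})"
    unfolding visits_def by (rule card_mono[rotated]) (simp add: assms(1))
  also have "\<dots> \<le> (\<Sum>c\<in>L. visits x n (A c))"
    unfolding visits_def by (rule card_UN_le[OF assms(1)])
  finally show ?thesis .
qed

lemma design_supp_emp_design:
  assumes "1 \<le> n"
  shows "design_supp (emp_design x n) = x ` {1..n}"
proof -
  have "card {i\<in>{1..n}. x i = z} \<noteq> 0 \<longleftrightarrow> z \<in> x ` {1..n}" for z
    by (auto simp: card_eq_0_iff)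
  then show ?thesis using assms by (auto simp: design_supp_def emp_design_def)
qed

lemma sum_emp_design:
  fixes h :: "'a \<Rightarrow> 'c::real_vector"
  assumes "1 \<le> n"
  shows "(\<Sum>z\<in>design_supp (emp_design x n). emp_design x n z *\<^sub>R h z)
       = (1 / real n) *\<^sub>R (\<Sum>i=1..n. h (x i))"
proof -
  have "(\<Sum>i=1..n. h (x i)) = (\<Sum>z\<in>x ` {1..n}. \<Sum>i\<in>{i\<in>{1..n}. x i = z}. h (x i))"
    by (rule sum.image_gen) simp
  also have "\<dots> = (\<Sum>z\<in>x ` {1..n}. real (card {i\<in>{1..n}. x i = z}) *\<^sub>R h z)"
    by (intro sum.cong refl) (simp add: sum_constant_scaleR[symmetric])
  finally have "(1 / real n) *\<^sub>R (\<Sum>i=1..n. h (x i))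
      = (\<Sum>z\<in>x ` {1..n}. (real (card {i\<in>{1..n}. x i = z}) / real n) *\<^sub>R h z)"
    by (simp add: scaleR_sum_right)
  then show ?thesis
    unfolding design_supp_emp_design[OF assms] by (simp add: emp_design_def)
qed

lemma design_meas_emp_design:
  assumes "1 \<le> n"
  shows "design_meas (emp_design x n) S = real (visits x n S) / real n"
proof -
  have "design_meas (emp_design x n) S
      = (\<Sum>z\<in>design_supp (emp_design x n). emp_design x n z *\<^sub>R (indicator S z :: real))"
    unfolding design_meas_def design_supp_emp_design[OF assms]
    by (simp add: sum.inter_restrict indicator_def)
  also have "\<dots> = (1 / real n) *\<^sub>R (\<Sum>i=1..n. indicator S (x i))"
    by (rule sum_emp_design[OF assms])
  also have "(\<Sum>i=1..n. indicator S (x i) :: real) = real (visits x n S)"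
    by (simp add: visits_def indicator_def sum.If_cases Int_def conj_commute)
  finally show ?thesis by simp
qed

lemma outer_mult_vec: "outer g *v v = (g \<bullet> v) *\<^sub>R g"
  by (simp add: outer_def matrix_vector_mult_def vec_eq_iff inner_vec_def sum_distrib_left
      mult.commute mult.left_commute)

lemma sum_mult_vec: "finite I \<Longrightarrow> (\<Sum>i\<in>I. A i) *v (v::real^'n) = (\<Sum>i\<in>I. A i *v v)"
  by (induction I rule: finite_induct) (auto simp: matrix_vector_mult_add_rdistrib)

lemma info_matrix_emp_design_bilinear:
  assumes "1 \<le> n"
  shows "a \<bullet> (info_matrix f (emp_design x n) t *v b)
     = (1 / real n) * (\<Sum>i=1..n. (a \<bullet> f t (x i)) * (b \<bullet> f t (x i)))"
  using sum_emp_design[OF assms, where h = "\<lambda>z. outer (f t z)"]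
  by (simp add: info_matrix_def scaleR_matrix_vector_assoc[symmetric] sum_mult_vec
      outer_mult_vec inner_sum_right inner_commute mult.commute)

lemma info_matrix_emp_design_quadratic:
  assumes "1 \<le> n"
  shows "a \<bullet> (info_matrix f (emp_design x n) t *v a) = (1 / real n) * (\<Sum>i=1..n. (a \<bullet> f t (x i))\<^sup>2)"
  using info_matrix_emp_design_bilinear[OF assms] by (simp add: power2_eq_square)

lemma info_matrix_emp_design_nonneg:
  "1 \<le> n \<Longrightarrow> 0 \<le> a \<bullet> (info_matrix f (emp_design x n) t *v a)"
  by (simp add: info_matrix_emp_design_quadratic sum_nonneg)

lemma info_matrix_emp_design_Cauchy_Schwarz:
  fixes f :: "'b \<Rightarrow> 'a \<Rightarrow> real^'p" and x :: "nat \<Rightarrow> 'a" and t :: 'b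
  assumes n: "1 \<le> n"
  defines "M \<equiv> info_matrix f (emp_design x n) t"
  shows "(a \<bullet> (M *v b))\<^sup>2 \<le> (a \<bullet> (M *v a)) * (b \<bullet> (M *v b))"
proof -
  have "(\<Sum>i=1..n. (a \<bullet> f t (x i)) * (b \<bullet> f t (x i)))\<^sup>2
     \<le> (\<Sum>i=1..n. (a \<bullet> f t (x i))\<^sup>2) * (\<Sum>i=1..n. (b \<bullet> f t (x i))\<^sup>2)"
    by (rule Cauchy_Schwarz_ineq_sum)
  then have "(\<Sum>i=1..n. (a \<bullet> f t (x i)) * (b \<bullet> f t (x i)))\<^sup>2 / (real n)\<^sup>2
     \<le> (\<Sum>i=1..n. (a \<bullet> f t (x i))\<^sup>2) * (\<Sum>i=1..n. (b \<bullet> f t (x i))\<^sup>2) / (real n)\<^sup>2"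
    by (rule divide_right_mono) simp
  then show ?thesis
    unfolding M_def info_matrix_emp_design_bilinear[OF n] info_matrix_emp_design_quadratic[OF n]
    by (simp add: power_divide power2_eq_square)
qed

lemma matrix_inv_mult_vec_right:
  fixes A :: "real^'n^'n"
  assumes "\<And>v. A *v v = 0 \<Longrightarrow> v = 0"
  shows "A *v (matrix_inv A *v u) = u"
proof -
  have "invertible A"
    using assms
    by (simp add: matrix_left_invertible_ker invertible_left_inverse)
  then have "A ** matrix_inv A = mat 1"
    unfolding invertible_def matrix_inv_def by (rule someI2_ex) blast
  then show ?thesis by (simp add: matrix_vector_mul_assoc)
qed

lemma exists_unit_orthogonal_image:
  fixes g :: "'a \<Rightarrow> real^'n"
  assumes "finite Y" "card Y < CARD('n)"
  obtains e where "norm e = 1" "\<And>y. y \<in> Y \<Longrightarrow> e \<bullet> g y = 0"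
proof -
  have "dim (g ` Y) \<le> card (g ` Y)"
    using assms(1) by (intro dim_le_card) (auto intro: span_base)
  also have "\<dots> < DIM(real^'n)"
    using card_image_le[OF assms(1), of g] assms(2) by simp
  finally obtain v where "v \<noteq> 0" and v: "\<And>y. y \<in> span (g ` Y) \<Longrightarrow> orthogonal v y"
    using orthogonal_to_subspace_exists by blast
  show thesis
  proof (rule that[of "(1 / norm v) *\<^sub>R v"])
    show "norm ((1 / norm v) *\<^sub>R v) = 1" using \<open>v \<noteq> 0\<close> by simp
    show "(1 / norm v) *\<^sub>R v \<bullet> g y = 0" if "y \<in> Y" for y
      using v[of "g y"] that by (auto simp: orthogonal_def intro: span_base)
  qed
qed

section \<open>Compactness and separation in metric spaces\<close>

lemma compact_uniformly_equicontinuous: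
  fixes f :: "'b::metric_space \<Rightarrow> 'a::metric_space \<Rightarrow> 'c::metric_space"
  assumes "compact X" "compact T" "continuous_on (X \<times> T) (\<lambda>(z, t). f t z)" "0 < \<eta>"
  obtains \<delta> where "0 < \<delta>"
    "\<And>t z z'. t \<in> T \<Longrightarrow> z \<in> X \<Longrightarrow> z' \<in> X \<Longrightarrow> dist z z' < \<delta> \<Longrightarrow> dist (f t z) (f t z') < \<eta>"
proof -
  have "uniformly_continuous_on (X \<times> T) (\<lambda>(z, t). f t z)"
    using assms(1-3) by (intro compact_uniformly_continuous compact_Times)
  then obtain \<delta> where "0 < \<delta>" and \<delta>: "\<forall>p\<in>X \<times> T. \<forall>q\<in>X \<times> T.
      dist q p < \<delta> \<longrightarrow> dist ((\<lambda>(z, t). f t z) q) ((\<lambda>(z, t). f t z) p) < \<eta>"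
    using assms(4) unfolding uniformly_continuous_on_def by blast
  have "dist (f t z) (f t z') < \<eta>" if "t \<in> T" "z \<in> X" "z' \<in> X" "dist z z' < \<delta>" for t z z'
    using \<delta>[rule_format, of "(z', t)" "(z, t)"] that by (simp add: dist_Pair_Pair)
  with \<open>0 < \<delta>\<close> show thesis by (rule that)
qed

lemma compact_finite_ball_cover:
  fixes X :: "'a::metric_space set"
  assumes "compact X" "0 < r"
  obtains C where "finite C" "C \<subseteq> X" "X \<subseteq> (\<Union>c\<in>C. ball c r)"
proof -
  have "\<exists>C. finite C \<and> C \<subseteq> X \<and> X \<subseteq> (\<Union>c\<in>C. ball c r)"
    using seq_compact_imp_totally_bounded[OF compact_imp_seq_compact[OF assms(1)]] assms(2) by simp
  then show thesis using that by blast
qed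

lemma diameter_ball_le:
  fixes a :: "'a::metric_space"
  assumes "0 \<le> r"
  shows "diameter (ball a r) \<le> 2 * r"
proof -
  have "dist u v \<le> 2 * r" if "u \<in> ball a r" "v \<in> ball a r" for u v
    using that dist_triangle[of u v a] by (simp add: dist_commute)
  then show ?thesis
    using assms unfolding diameter_def by (auto intro: cSUP_least)
qed

lemma setdist_ge_dist_centers:
  fixes a b :: "'a::metric_space"
  assumes "a \<in> S" "S \<subseteq> ball a r" "b \<in> U" "U \<subseteq> ball b r"
  shows "dist a b - 2 * r \<le> setdist S U"
proof (rule le_setdistI)
  fix u v assume "u \<in> S" "v \<in> U"
  then have "dist a u < r" "dist b v < r" using assms by auto
  moreover have "dist a b \<le> dist a u + dist u v + dist v b"
    using dist_triangle[of a b u] dist_triangle[of u b v] by linarith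
  ultimately show "dist a b - 2 * r \<le> dist u v" by (simp add: dist_commute)
qed (use assms in auto)

lemma finite_maximal_separated_subset:
  fixes H :: "'a::metric_space set"
  assumes "finite H" "0 < s"
  obtains F where "F \<subseteq> H" "\<And>a b. a \<in> F \<Longrightarrow> b \<in> F \<Longrightarrow> a \<noteq> b \<Longrightarrow> s \<le> dist a b"
    "\<And>c. c \<in> H \<Longrightarrow> \<exists>y\<in>F. dist c y < s"
proof -
  have "\<exists>F. F \<subseteq> H \<and> (\<forall>a\<in>F. \<forall>b\<in>F. a \<noteq> b \<longrightarrow> s \<le> dist a b) \<and> (\<forall>c\<in>H. \<exists>y\<in>F. dist c y < s)"
    using assms(1)
  proof (induction H rule: finite_induct)
    case empty
    show ?case by blast
  next
    case (insert c H)
    from insert.IH obtain F where F: "F \<subseteq> H" and sep: "\<forall>a\<in>F. \<forall>b\<in>F. a \<noteq> b \<longrightarrow> s \<le> dist a b"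
      and near: "\<forall>c\<in>H. \<exists>y\<in>F. dist c y < s"
      by (elim exE conjE)
    show ?case
    proof (cases "\<exists>y\<in>F. dist c y < s")
      case True
      with F sep near show ?thesis by (intro exI[of _ F]) auto
    next
      case False
      then have "\<forall>a\<in>insert c F. \<forall>b\<in>insert c F. a \<noteq> b \<longrightarrow> s \<le> dist a b"
        using sep by (simp add: not_less dist_commute)
      moreover have "\<forall>c'\<in>insert c H. \<exists>y\<in>insert c F. dist c' y < s"
        using near assms(2) by simp
      ultimately show ?thesis using F by (intro exI[of _ "insert c F"]) auto
    qed
  qed
  then show thesis using that by (elim exE conjE) auto
qed

lemma steps_le_by_cell_visits:
  fixes x :: "nat \<Rightarrow> 'a" and A :: "'c \<Rightarrow> 'a set"
  assumes "finite C" "0 \<le> K"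
    and cover: "\<And>i. n < i \<Longrightarrow> i \<le> m \<Longrightarrow> \<exists>c\<in>C. x i \<in> A c"
    and sparse: "\<And>t c. n \<le> t \<Longrightarrow> t < m \<Longrightarrow> c \<in> C \<Longrightarrow> x (Suc t) \<in> A c \<Longrightarrow> real (visits x t (A c)) \<le> K"
  shows "real (m - n) \<le> real (card C) * (K + 1)"
proof -
  define J where "J c = {i\<in>{n<..m}. x i \<in> A c}" for c
  have card_J: "real (card (J c)) \<le> K + 1" if "c \<in> C" for c
  proof (cases "J c = {}")
    case False
    define j where "j = Max (J c)"
    have "j \<in> J c" "finite (J c)" using Max_in[OF _ False] by (auto simp: j_def J_def)
    then have j: "n < j" "j \<le> m" "x (Suc (j - 1)) \<in> A c" by (auto simp: J_def)
    have "J c \<subseteq> insert j {i\<in>{1..j - 1}. x i \<in> A c}"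
    proof
      fix i assume i: "i \<in> J c"
      then have "i \<le> j" unfolding j_def using \<open>finite (J c)\<close> by simp
      with i show "i \<in> insert j {i\<in>{1..j - 1}. x i \<in> A c}" by (auto simp: J_def)
    qed
    then have "card (J c) \<le> card (insert j {i\<in>{1..j - 1}. x i \<in> A c})"
      by (rule card_mono[rotated]) simp
    also have "\<dots> \<le> visits x (j - 1) (A c) + 1"
      by (simp add: visits_def card_insert_if)
    finally have "card (J c) \<le> visits x (j - 1) (A c) + 1" .
    then show ?thesis using sparse[of "j - 1" c] j that by linarith
  qed (use assms(2) in simp)
  have "{n<..m} \<subseteq> (\<Union>c\<in>C. J c)" using cover by (auto simp: J_def)
  then have "card {n<..m} \<le> card (\<Union>c\<in>C. J c)"
    by (rule card_mono[rotated]) (simp add: J_def assms(1))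
  also have "\<dots> \<le> (\<Sum>c\<in>C. card (J c))" by (rule card_UN_le[OF assms(1)])
  finally have "real (m - n) \<le> (\<Sum>c\<in>C. real (card (J c)))"
    by (simp flip: of_nat_sum)
  also have "\<dots> \<le> real (card C) * (K + 1)" using card_J by (rule sum_bounded_above)
  finally show ?thesis .
qed

lemma visits_far_le_light_balls:
  fixes x :: "nat \<Rightarrow> 'a::metric_space"
  assumes "finite C" and covered: "\<And>i. 1 \<le> i \<Longrightarrow> i \<le> n \<Longrightarrow> \<exists>c\<in>C. x i \<in> ball c r"
    and near: "\<And>c. c \<in> H \<Longrightarrow> \<exists>y\<in>F. dist c y < s"
  shows "visits x n (- (\<Union>y\<in>F. ball y (s + r))) \<le> (\<Sum>c\<in>C - H. visits x n (ball c r))"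
proof (rule visits_le_sum_visits_cover)
  fix i assume i: "1 \<le> i" "i \<le> n" "x i \<in> - (\<Union>y\<in>F. ball y (s + r))"
  then obtain c where c: "c \<in> C" "dist c (x i) < r" using covered by fastforce
  have "c \<notin> H"
  proof
    assume "c \<in> H"
    then obtain y where "y \<in> F" "dist c y < s" using near by blast
    then show False
      using i(3) c(2) dist_triangle[of y "x i" c] by (auto simp: dist_commute)
  qed
  with c show "\<exists>c\<in>C - H. x i \<in> ball c r" by auto
qed (use \<open>finite C\<close> in simp)

lemma card_heavy_net_ge:
  fixes x :: "nat \<Rightarrow> 'a::metric_space"
  assumes "0 \<le> \<pi>" "finite C"
    and covered: "\<And>i. 1 \<le> i \<Longrightarrow> i \<le> n \<Longrightarrow> \<exists>c\<in>C. x i \<in> ball c r"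
    and far: "\<And>Y. Y \<subseteq> X \<Longrightarrow> finite Y \<Longrightarrow> card Y < CARD('p) \<Longrightarrow>
      real (card C) * \<pi> * real n < real (visits x n (- (\<Union>y\<in>Y. ball y (5 * r))))"
    and "F \<subseteq> C" "C \<subseteq> X"
    and net: "\<And>c. c \<in> C \<Longrightarrow> \<pi> * real n \<le> real (visits x n (ball c r)) \<Longrightarrow> \<exists>y\<in>F. dist c y < 4 * r"
  shows "CARD('p::finite) \<le> card F"
proof (rule ccontr)
  define H where "H = {c\<in>C. \<pi> * real n \<le> real (visits x n (ball c r))}"
  assume "\<not> CARD('p) \<le> card F"
  have "5 * r = 4 * r + r" by simp
  then have "visits x n (- (\<Union>y\<in>F. ball y (5 * r))) \<le> (\<Sum>c\<in>C - H. visits x n (ball c r))"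
    using visits_far_le_light_balls[OF \<open>finite C\<close> covered, where H = H and F = F and s = "4 * r"] net
    by (simp add: H_def)
  then have "real (visits x n (- (\<Union>y\<in>F. ball y (5 * r)))) \<le> (\<Sum>c\<in>C - H. real (visits x n (ball c r)))"
    by (simp flip: of_nat_sum)
  also have "\<dots> \<le> real (card (C - H)) * (\<pi> * real n)"
    by (rule sum_bounded_above) (auto simp: H_def)
  also have "\<dots> \<le> real (card C) * (\<pi> * real n)"
    using \<open>0 \<le> \<pi>\<close> \<open>finite C\<close> by (intro mult_right_mono) (auto intro: card_mono)
  also have "\<dots> = real (card C) * \<pi> * real n"
    by (simp only: mult.assoc)
  finally show False
    using far[of F] \<open>F \<subseteq> C\<close> \<open>C \<subseteq> X\<close> \<open>finite C\<close> \<open>\<not> CARD('p) \<le> card F\<close>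
    by (meson finite_subset not_le order_trans)
qed

lemma separated_heavy_balls:
  fixes x :: "nat \<Rightarrow> 'a::metric_space" and C :: "'a set"
  assumes "0 < r" "1 \<le> n" "0 \<le> \<pi>" "finite C" "C \<subseteq> X" "X \<subseteq> (\<Union>c\<in>C. ball c r)"
    and x_in_X: "\<And>i. 1 \<le> i \<Longrightarrow> i \<le> n \<Longrightarrow> x i \<in> X"
    and far: "\<And>Y. Y \<subseteq> X \<Longrightarrow> finite Y \<Longrightarrow> card Y < CARD('p) \<Longrightarrow>
      real (card C) * \<pi> * real n < real (visits x n (- (\<Union>y\<in>Y. ball y (5 * r))))"
  shows "\<exists>S :: 'p::finite \<Rightarrow> 'a set.
           (\<forall>j. S j \<subseteq> X \<and> design_meas (emp_design x n) (S j) \<ge> \<pi> \<and> diameter (S j) \<le> 2 * r)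
         \<and> (\<forall>j k. j \<noteq> k \<longrightarrow> setdist (S j) (S k) \<ge> 2 * r)"
proof -
  define H where "H = {c\<in>C. \<pi> * real n \<le> real (visits x n (ball c r))}"
  obtain F where F: "F \<subseteq> H" and F_sep: "\<And>a b. a \<in> F \<Longrightarrow> b \<in> F \<Longrightarrow> a \<noteq> b \<Longrightarrow> 4 * r \<le> dist a b"
    and F_near: "\<And>c. c \<in> H \<Longrightarrow> \<exists>y\<in>F. dist c y < 4 * r"
    using finite_maximal_separated_subset[of H "4 * r"] \<open>finite C\<close> \<open>0 < r\<close> by (auto simp: H_def)
  have "finite F" using F \<open>finite C\<close> by (auto simp: H_def finite_subset)
  have covered: "\<exists>c\<in>C. x i \<in> ball c r" if "1 \<le> i" "i \<le> n" for i
    using x_in_X[OF that] assms(6) by blast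
  have "CARD('p) \<le> card F"
    using F F_near \<open>C \<subseteq> X\<close>
    by (intro card_heavy_net_ge[OF \<open>0 \<le> \<pi>\<close> \<open>finite C\<close> covered far]) (auto simp: H_def)
  then obtain \<phi> :: "'p \<Rightarrow> 'a" where "inj \<phi>" "range \<phi> \<subseteq> F"
    using card_le_inj[of "UNIV :: 'p set" F] \<open>finite F\<close> by auto
  then have \<phi>: "\<phi> j \<in> H" "\<phi> j \<in> X" for j using F \<open>C \<subseteq> X\<close> by (auto simp: H_def)
  define S where "S j = ball (\<phi> j) r \<inter> X" for j
  have "design_meas (emp_design x n) (S j) = real (visits x n (ball (\<phi> j) r)) / real n" for j
    unfolding design_meas_emp_design[OF \<open>1 \<le> n\<close>] S_def visits_def
    by (intro arg_cong[where f = "\<lambda>k. real (card k) / real n"]) (auto intro: x_in_X)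
  then have "\<pi> \<le> design_meas (emp_design x n) (S j)" for j
    using \<phi>(1)[of j] \<open>1 \<le> n\<close> by (simp add: H_def pos_le_divide_eq)
  moreover have "diameter (S j) \<le> 2 * r" for j
    using diameter_subset[of "S j" "ball (\<phi> j) r"] diameter_ball_le[of r "\<phi> j"] \<open>0 < r\<close>
    by (simp add: S_def)
  moreover have "2 * r \<le> setdist (S j) (S k)" if "j \<noteq> k" for j k
  proof -
    have "4 * r \<le> dist (\<phi> j) (\<phi> k)"
      using \<open>range \<phi> \<subseteq> F\<close> \<open>inj \<phi>\<close> that by (intro F_sep) (auto simp: inj_eq)
    moreover have "dist (\<phi> j) (\<phi> k) - 2 * r \<le> setdist (S j) (S k)"
      by (rule setdist_ge_dist_centers) (use \<phi>(2) \<open>0 < r\<close> in \<open>auto simp: S_def\<close>)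
    ultimately show ?thesis by linarith
  qed
  ultimately show ?thesis by (intro exI[of _ S]) (auto simp: S_def)
qed

section \<open>Sequentially chosen design points\<close>

locale sequential_design =
  fixes X :: "'a::metric_space set" and T :: "'b::metric_space set"
    and f :: "'b \<Rightarrow> 'a \<Rightarrow> real^'p"
    and x :: "nat \<Rightarrow> 'a" and \<theta> :: "nat \<Rightarrow> 'b" and n_st :: nat
  assumes compact_X: "compact X" and X_nonempty: "X \<noteq> {}"
    and compact_T: "compact T" and T_nonempty: "T \<noteq> {}"
    and continuous_f: "continuous_on (X \<times> T) (\<lambda>(z, t). f t z)"
    and x_initial: "\<And>i. 1 \<le> i \<Longrightarrow> i \<le> n_st \<Longrightarrow> x i \<in> X"
    and pos_def_initial: "\<And>t. t \<in> T \<Longrightarrow> pos_def (info_matrix f (emp_design x n_st) t)"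
    and \<theta>_in_T: "\<And>n. n \<ge> n_st \<Longrightarrow> \<theta> n \<in> T"
    and x_next: "\<And>n. n \<ge> n_st \<Longrightarrow> x (Suc n) \<in> X \<and>
          (\<forall>z\<in>X. f (\<theta> n) z \<bullet> (matrix_inv (info_matrix f (emp_design x n) (\<theta> n)) *v f (\<theta> n) z)
               \<le> f (\<theta> n) (x (Suc n)) \<bullet> (matrix_inv (info_matrix f (emp_design x n) (\<theta> n)) *v f (\<theta> n) (x (Suc n))))"
begin

abbreviation info :: "nat \<Rightarrow> 'b \<Rightarrow> real^'p^'p" where
  "info n t \<equiv> info_matrix f (emp_design x n) t"

abbreviation sensitivity :: "nat \<Rightarrow> 'b \<Rightarrow> 'a \<Rightarrow> real" where
  "sensitivity n t z \<equiv> f t z \<bullet> (matrix_inv (info n t) *v f t z)"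

abbreviation max_sensitivity :: "nat \<Rightarrow> real" where
  "max_sensitivity n \<equiv> sensitivity n (\<theta> n) (x (Suc n))"

lemma n_st_pos: "1 \<le> n_st"
proof (rule ccontr)
  obtain t where "t \<in> T" using T_nonempty by blast
  assume "\<not> 1 \<le> n_st"
  then have "info n_st t = 0"
    by (simp add: info_matrix_def emp_design_def design_supp_def)
  moreover have "(vec 1 :: real^'p) \<noteq> 0" by (simp add: vec_eq_iff)
  ultimately show False using pos_def_initial[OF \<open>t \<in> T\<close>] unfolding pos_def_def by force
qed

lemma x_in_X: "1 \<le> i \<Longrightarrow> x i \<in> X"
  using x_initial x_next[of "i - 1"] by (cases "i \<le> n_st") auto

lemma info_quadratic_pos:
  assumes "n_st \<le> n" "t \<in> T" "v \<noteq> 0"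
  shows "0 < v \<bullet> (info n t *v v)"
proof -
  have "0 < v \<bullet> (info n_st t *v v)"
    using pos_def_initial[OF assms(2)] assms(3) by (simp add: pos_def_def)
  then have "0 < (\<Sum>i=1..n_st. (v \<bullet> f t (x i))\<^sup>2)"
    using n_st_pos by (simp add: info_matrix_emp_design_quadratic zero_less_divide_iff)
  also have "\<dots> \<le> (\<Sum>i=1..n. (v \<bullet> f t (x i))\<^sup>2)"
    by (rule sum_mono2) (use assms(1) in auto)
  finally show ?thesis
    using assms(1) n_st_pos by (simp add: info_matrix_emp_design_quadratic)
qed

lemma info_mult_inverse: "n_st \<le> n \<Longrightarrow> t \<in> T \<Longrightarrow> info n t *v (matrix_inv (info n t) *v u) = u"
  by (rule matrix_inv_mult_vec_right) (use info_quadratic_pos in fastforce)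

lemma ex_signal: "\<exists>\<gamma>>0. \<forall>t\<in>T. \<forall>e. norm e = 1 \<longrightarrow> (\<exists>z\<in>X. \<gamma> \<le> (e \<bullet> f t z)\<^sup>2)"
proof -
  define Q where "Q p = (\<Sum>i=1..n_st. (snd p \<bullet> f (fst p) (x i))\<^sup>2)" for p :: "'b \<times> (real^'p)"
  have "continuous_on (T \<times> sphere 0 1) (\<lambda>p. f (fst p) (x i))" if "1 \<le> i" for i
  proof -
    have "continuous_on (T \<times> sphere 0 1) (\<lambda>p. (\<lambda>(z, t). f t z) (x i, fst p))"
      by (rule continuous_on_compose2[OF continuous_f])
        (use x_in_X[OF that] in \<open>auto intro!: continuous_intros\<close>)
    then show ?thesis by simp
  qed
  then have "continuous_on (T \<times> sphere 0 1) Q"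
    unfolding Q_def by (intro continuous_intros) auto
  moreover obtain e0 :: "real^'p" where "norm e0 = 1"
    using vector_choose_size[of 1] by auto
  ultimately obtain p where p: "p \<in> T \<times> sphere 0 1" "\<And>q. q \<in> T \<times> sphere 0 1 \<Longrightarrow> Q p \<le> Q q"
    using continuous_attains_inf[OF compact_Times[OF compact_T compact_sphere]] T_nonempty
    by (metis empty_iff mem_Sigma_iff mem_sphere_0 equals0I)
  define \<gamma> where "\<gamma> = Q p / real n_st"
  have "0 < snd p \<bullet> (info n_st (fst p) *v snd p)"
    using p(1) by (intro info_quadratic_pos) auto
  then have "0 < \<gamma>"
    using n_st_pos by (simp add: \<gamma>_def Q_def info_matrix_emp_design_quadratic)
  moreover have "\<exists>z\<in>X. \<gamma> \<le> (e \<bullet> f t z)\<^sup>2" if "t \<in> T" "norm e = 1" for t e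
  proof (rule ccontr)
    assume "\<not> ?thesis"
    then have "(e \<bullet> f t (x i))\<^sup>2 < \<gamma>" if "i \<in> {1..n_st}" for i
      using x_in_X that by force
    then have "Q (t, e) < (\<Sum>i=1..n_st. \<gamma>)"
      unfolding Q_def using n_st_pos by (intro sum_strict_mono) auto
    also have "\<dots> = Q p" using n_st_pos by (simp add: \<gamma>_def)
    finally show False using p(2)[of "(t, e)"] that by auto
  qed
  ultimately show ?thesis by blast
qed

definition signal :: real where
  "signal = (SOME \<gamma>. 0 < \<gamma> \<and> (\<forall>t\<in>T. \<forall>e. norm e = 1 \<longrightarrow> (\<exists>z\<in>X. \<gamma> \<le> (e \<bullet> f t z)\<^sup>2)))"

lemma signal_pos: "0 < signal"
  and signal_attained: "t \<in> T \<Longrightarrow> norm e = 1 \<Longrightarrow> \<exists>z\<in>X. signal \<le> (e \<bullet> f t z)\<^sup>2"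
  using someI_ex[OF ex_signal] unfolding signal_def by blast+

lemma signal_le_max_sensitivity:
  assumes "n_st \<le> n" "norm e = 1"
  shows "signal \<le> max_sensitivity n * (e \<bullet> (info n (\<theta> n) *v e))"
proof -
  have n: "1 \<le> n" using assms(1) n_st_pos by linarith
  have t: "\<theta> n \<in> T" using \<theta>_in_T assms(1) by simp
  obtain z where z: "z \<in> X" "signal \<le> (e \<bullet> f (\<theta> n) z)\<^sup>2"
    using signal_attained[OF t assms(2)] by blast
  define A where "A = info n (\<theta> n)"
  define w where "w = matrix_inv A *v f (\<theta> n) z"
  have Aw: "A *v w = f (\<theta> n) z"
    unfolding A_def w_def by (rule info_mult_inverse[OF assms(1) t])
  have "signal \<le> (e \<bullet> (A *v w))\<^sup>2" using z Aw by simp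
  also have "\<dots> \<le> (e \<bullet> (A *v e)) * (w \<bullet> (A *v w))"
    unfolding A_def by (rule info_matrix_emp_design_Cauchy_Schwarz[OF n])
  also have "\<dots> \<le> (e \<bullet> (A *v e)) * max_sensitivity n"
  proof (rule mult_left_mono)
    have "w \<bullet> (A *v w) = sensitivity n (\<theta> n) z"
      unfolding Aw by (simp add: w_def A_def inner_commute)
    then show "w \<bullet> (A *v w) \<le> max_sensitivity n"
      using x_next[OF assms(1)] z(1) by simp
    show "0 \<le> e \<bullet> (A *v e)"
      unfolding A_def by (rule info_matrix_emp_design_nonneg[OF n])
  qed
  finally show ?thesis by (simp add: A_def mult.commute)
qed

lemma max_sensitivity_pos:
  assumes "n_st \<le> n"
  shows "0 < max_sensitivity n"
proof (rule ccontr)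
  obtain e :: "real^'p" where e: "norm e = 1" using vector_choose_size[of 1] by auto
  assume "\<not> 0 < max_sensitivity n"
  moreover have "0 \<le> e \<bullet> (info n (\<theta> n) *v e)"
    using assms n_st_pos by (intro info_matrix_emp_design_nonneg) linarith
  ultimately have "max_sensitivity n * (e \<bullet> (info n (\<theta> n) *v e)) \<le> 0"
    by (simp add: mult_nonpos_nonneg)
  then show False using signal_le_max_sensitivity[OF assms e] signal_pos by linarith
qed

lemma sqrt_signal_mult_norm_le:
  assumes "n_st \<le> n"
  shows "sqrt signal * norm (matrix_inv (info n (\<theta> n)) *v f (\<theta> n) (x (Suc n))) \<le> max_sensitivity n"
proof -
  define A where "A = info n (\<theta> n)"
  define w where "w = matrix_inv A *v f (\<theta> n) (x (Suc n))"
  define d where "d = max_sensitivity n"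
  have "A *v w = f (\<theta> n) (x (Suc n))"
    unfolding A_def w_def by (rule info_mult_inverse[OF assms \<theta>_in_T[OF assms]])
  then have quad_w: "w \<bullet> (A *v w) = d" by (simp add: w_def A_def d_def inner_commute)
  have "0 < d" using max_sensitivity_pos[OF assms] by (simp add: d_def)
  have "sqrt signal * norm w \<le> d"
  proof (cases "w = 0")
    case False
    define e where "e = (1 / norm w) *\<^sub>R w"
    have "norm e = 1" using False by (simp add: e_def)
    moreover have "e \<bullet> (A *v e) = d / (norm w)\<^sup>2"
      using quad_w by (simp add: e_def matrix_vector_mult_scaleR power2_eq_square)
    ultimately have "signal \<le> d * (d / (norm w)\<^sup>2)"
      using signal_le_max_sensitivity[OF assms, of e] by (simp add: A_def d_def)
    then have "signal * (norm w)\<^sup>2 \<le> d\<^sup>2"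
      using False by (simp add: field_simps power2_eq_square)
    then have "sqrt (signal * (norm w)\<^sup>2) \<le> sqrt (d\<^sup>2)" by (rule real_sqrt_le_mono)
    then show ?thesis using \<open>0 < d\<close> signal_pos by (simp add: real_sqrt_mult)
  qed (use \<open>0 < d\<close> in simp)
  then show ?thesis by (simp add: w_def A_def d_def)
qed

lemma visits_near_next_point:
  assumes "n_st \<le> n"
    and near: "\<And>z. z \<in> S \<Longrightarrow> z \<in> X \<Longrightarrow> norm (f (\<theta> n) z - f (\<theta> n) (x (Suc n))) \<le> sqrt signal / 2"
  shows "real (visits x n S) * max_sensitivity n \<le> 4 * real n"
proof -
  have n: "1 \<le> n" using assms(1) n_st_pos by linarith
  define A where "A = info n (\<theta> n)"
  define u where "u = f (\<theta> n) (x (Suc n))"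
  define w where "w = matrix_inv A *v u"
  define d where "d = max_sensitivity n"
  have Aw: "A *v w = u"
    unfolding A_def w_def by (rule info_mult_inverse[OF assms(1) \<theta>_in_T[OF assms(1)]])
  have "w \<bullet> u = d" by (simp add: w_def u_def A_def d_def inner_commute)
  then have d: "0 < d" "w \<bullet> u = d" "w \<bullet> (A *v w) = d"
    using max_sensitivity_pos[OF assms(1)] by (simp_all add: d_def Aw)
  have "d / 2 \<le> w \<bullet> f (\<theta> n) (x i)" if "i \<in> {i\<in>{1..n}. x i \<in> S}" for i
  proof -
    have "\<bar>w \<bullet> (f (\<theta> n) (x i) - u)\<bar> \<le> norm w * norm (f (\<theta> n) (x i) - u)"
      by (rule Cauchy_Schwarz_ineq2)
    also have "\<dots> \<le> norm w * (sqrt signal / 2)"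
      using near[of "x i"] x_in_X[of i] that by (intro mult_left_mono) (auto simp: u_def)
    also have "\<dots> \<le> d / 2"
      using sqrt_signal_mult_norm_le[OF assms(1)] by (simp add: w_def u_def A_def d_def mult.commute)
    finally have "\<bar>w \<bullet> f (\<theta> n) (x i) - d\<bar> \<le> d / 2" using d(2) by (simp add: inner_diff_right)
    then show ?thesis using abs_le_D2 by fastforce
  qed
  then have "real (visits x n S) * (d / 2)\<^sup>2 \<le> (\<Sum>i\<in>{i\<in>{1..n}. x i \<in> S}. (w \<bullet> f (\<theta> n) (x i))\<^sup>2)"
    unfolding visits_def using d(1) by (intro sum_bounded_below power_mono) auto
  also have "\<dots> \<le> (\<Sum>i=1..n. (w \<bullet> f (\<theta> n) (x i))\<^sup>2)"
    by (rule sum_mono2) auto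
  also have "\<dots> = real n * (w \<bullet> (A *v w))"
    using n by (simp add: A_def info_matrix_emp_design_quadratic)
  also have "\<dots> = real n * d" using d(3) by simp
  finally have "real (visits x n S) * d * d \<le> 4 * real n * d"
    by (simp add: power2_eq_square)
  then show ?thesis using d(1) by (simp add: d_def)
qed

lemma visits_ball_next_point_le:
  assumes "n_st \<le> t" "0 < N" "16 * N \<le> max_sensitivity t" "x (Suc t) \<in> ball c (\<delta> / 2)"
    and near: "\<And>z z'. z \<in> X \<Longrightarrow> z' \<in> X \<Longrightarrow> dist z z' < \<delta> \<Longrightarrow>
      dist (f (\<theta> t) z) (f (\<theta> t) z') < sqrt signal / 2"
  shows "real (visits x t (ball c (\<delta> / 2))) \<le> real t / (4 * N)"
proof -
  have "real (visits x t (ball c (\<delta> / 2))) * max_sensitivity t \<le> 4 * real t"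
  proof (rule visits_near_next_point[OF assms(1)])
    fix z assume "z \<in> ball c (\<delta> / 2)" "z \<in> X"
    then have "dist z (x (Suc t)) < \<delta>"
      using assms(4) dist_triangle_half_l[of z c \<delta> "x (Suc t)"] by (simp add: dist_commute)
    then show "norm (f (\<theta> t) z - f (\<theta> t) (x (Suc t))) \<le> sqrt signal / 2"
      using near[OF \<open>z \<in> X\<close> conjunct1[OF x_next[OF assms(1)]]] by (simp add: dist_norm)
  qed
  then have "real (visits x t (ball c (\<delta> / 2))) * (16 * N) \<le> 4 * real t"
    using assms(3) by (meson mult_left_mono of_nat_0_le_iff order_trans)
  then show ?thesis using \<open>0 < N\<close> by (simp add: field_simps)
qed

lemma exists_flat_direction:
  assumes "1 \<le> n" "finite Y" "card Y < CARD('p)" "0 \<le> \<omega>"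
    and bounded: "\<And>z. z \<in> X \<Longrightarrow> norm (f t z) \<le> B"
    and close: "\<And>z y. z \<in> X \<Longrightarrow> y \<in> Y \<Longrightarrow> dist z y < R \<Longrightarrow> norm (f t z - f t y) \<le> \<omega>"
  obtains e where "norm e = 1"
    "e \<bullet> (info n t *v e) \<le> \<omega>\<^sup>2 + B\<^sup>2 * (real (visits x n (- (\<Union>y\<in>Y. ball y R))) / real n)"
proof -
  define Far where "Far = - (\<Union>y\<in>Y. ball y R)"
  obtain e where e: "norm e = 1" and orth: "\<And>y. y \<in> Y \<Longrightarrow> e \<bullet> f t y = 0"
    using exists_unit_orthogonal_image[OF assms(2,3)] by blast
  have "(e \<bullet> f t (x i))\<^sup>2 \<le> \<omega>\<^sup>2 + (if x i \<in> Far then B\<^sup>2 else 0)" if "1 \<le> i" for i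
  proof (cases "x i \<in> Far")
    case True
    have "\<bar>e \<bullet> f t (x i)\<bar> \<le> B"
      using Cauchy_Schwarz_ineq2[of e "f t (x i)"] bounded[OF x_in_X[OF that]] e by simp
    then have "(e \<bullet> f t (x i))\<^sup>2 \<le> B\<^sup>2" by (metis abs_ge_zero power2_abs power_mono)
    then show ?thesis using True by (simp add: add_increasing)
  next
    case False
    then obtain y where y: "y \<in> Y" "dist (x i) y < R" by (auto simp: Far_def dist_commute)
    have "\<bar>e \<bullet> f t (x i)\<bar> \<le> norm e * norm (f t (x i) - f t y)"
      using Cauchy_Schwarz_ineq2[of e "f t (x i) - f t y"] orth[OF y(1)] by (simp add: inner_diff_right)
    also have "\<dots> \<le> \<omega>" using close[OF x_in_X[OF that] y] e by simp
    finally have "(e \<bullet> f t (x i))\<^sup>2 \<le> \<omega>\<^sup>2" by (metis abs_ge_zero power2_abs power_mono)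
    then show ?thesis using False by simp
  qed
  then have "(\<Sum>i=1..n. (e \<bullet> f t (x i))\<^sup>2) \<le> (\<Sum>i=1..n. \<omega>\<^sup>2 + (if x i \<in> Far then B\<^sup>2 else 0))"
    by (intro sum_mono) auto
  also have "\<dots> = real n * \<omega>\<^sup>2 + B\<^sup>2 * real (visits x n Far)"
    by (simp add: sum.distrib sum.If_cases visits_def Int_def conj_commute)
  finally have "e \<bullet> (info n t *v e) \<le> \<omega>\<^sup>2 + B\<^sup>2 * (real (visits x n Far) / real n)"
    using assms(1) by (simp add: info_matrix_emp_design_quadratic field_simps)
  with e show thesis unfolding Far_def by (rule that)
qed

lemma max_sensitivity_ge_of_few_far:
  assumes "n_st \<le> t" "0 < N" "finite Y" "card Y < CARD('p)" "Y \<subseteq> X"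
    and bounded: "\<And>z. z \<in> X \<Longrightarrow> norm (f (\<theta> t) z) \<le> B"
    and close: "\<And>z y. z \<in> X \<Longrightarrow> y \<in> X \<Longrightarrow> dist z y < R \<Longrightarrow>
      dist (f (\<theta> t) z) (f (\<theta> t) y) < sqrt (signal / (32 * N))"
    and few_far: "B\<^sup>2 * real (visits x t (- (\<Union>y\<in>Y. ball y R))) \<le> signal / (32 * N) * real t"
  shows "16 * N \<le> max_sensitivity t"
proof -
  have t: "1 \<le> t" using assms(1) n_st_pos by linarith
  have close_Y: "norm (f (\<theta> t) z - f (\<theta> t) y) \<le> sqrt (signal / (32 * N))"
    if "z \<in> X" "y \<in> Y" "dist z y < R" for z y
    using close[OF that(1) _ that(3)] \<open>Y \<subseteq> X\<close> that(2) by (force simp: dist_norm)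
  obtain e where e: "norm e = 1" and flat: "e \<bullet> (info t (\<theta> t) *v e)
      \<le> (sqrt (signal / (32 * N)))\<^sup>2 + B\<^sup>2 * (real (visits x t (- (\<Union>y\<in>Y. ball y R))) / real t)"
    by (rule exists_flat_direction[OF t assms(3,4) _ bounded close_Y]) (use signal_pos \<open>0 < N\<close> in auto)
  have "(sqrt (signal / (32 * N)))\<^sup>2 + B\<^sup>2 * (real (visits x t (- (\<Union>y\<in>Y. ball y R))) / real t)
      \<le> signal / (16 * N)"
    using few_far t signal_pos \<open>0 < N\<close> by (simp add: field_simps)
  with flat have "e \<bullet> (info t (\<theta> t) *v e) \<le> signal / (16 * N)" by linarith
  then have "signal \<le> max_sensitivity t * (signal / (16 * N))"
    using signal_le_max_sensitivity[OF assms(1) e] max_sensitivity_pos[OF assms(1)]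
    by (meson mult_left_mono less_imp_le order_trans)
  then show ?thesis
    using signal_pos \<open>0 < N\<close> by (simp add: field_simps)
qed

lemma max_sensitivity_small_in_second_half:
  assumes "finite C" "C \<noteq> {}" and cover: "X \<subseteq> (\<Union>c\<in>C. ball c (\<delta> / 2))"
    and near: "\<And>t z z'. t \<in> T \<Longrightarrow> z \<in> X \<Longrightarrow> z' \<in> X \<Longrightarrow> dist z z' < \<delta> \<Longrightarrow>
      dist (f t z) (f t z') < sqrt signal / 2"
    and m: "2 * n_st + 4 * card C + 3 \<le> m"
  shows "\<exists>t. m - m div 2 \<le> t \<and> t < m \<and> max_sensitivity t < 16 * real (card C)"
proof (rule ccontr)
  define N where "N = real (card C)"
  define k where "k = m - m div 2"
  have "1 \<le> N" using \<open>finite C\<close> \<open>C \<noteq> {}\<close> by (simp add: N_def Suc_le_eq card_gt_0_iff)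
  assume "\<not> ?thesis"
  then have large: "16 * N \<le> max_sensitivity t" if "k \<le> t" "t < m" for t
    using that by (auto simp: N_def k_def not_less)
  have "real (visits x t (ball c (\<delta> / 2))) \<le> real m / (4 * N)"
    if "k \<le> t" "t < m" "x (Suc t) \<in> ball c (\<delta> / 2)" for t c
  proof -
    have "n_st \<le> t" using that m by (simp add: k_def)
    then have "real (visits x t (ball c (\<delta> / 2))) \<le> real t / (4 * N)"
      using large[OF that(1,2)] near[OF \<theta>_in_T] \<open>1 \<le> N\<close> that(3)
      by (intro visits_ball_next_point_le) auto
    also have "\<dots> \<le> real m / (4 * N)"
      using that(2) \<open>1 \<le> N\<close> by (simp add: divide_right_mono)
    finally show ?thesis .
  qed
  then have "real (m - k) \<le> real (card C) * (real m / (4 * N) + 1)"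
  proof (intro steps_le_by_cell_visits[OF \<open>finite C\<close>])
    fix i assume "k < i" "i \<le> m"
    then have "x i \<in> X" by (intro x_in_X) simp
    then show "\<exists>c\<in>C. x i \<in> ball c (\<delta> / 2)" using cover by blast
  qed (use \<open>1 \<le> N\<close> in auto)
  then have "real (m - k) \<le> real m / 4 + N"
    using \<open>1 \<le> N\<close> by (simp add: N_def field_simps)
  moreover have "real m \<le> 2 * real (m - k) + 1" by (simp add: k_def)
  ultimately show False using m by (simp add: N_def)
qed

lemma far_mass_gt:
  fixes B :: real
  assumes "0 < B" and bounded: "\<And>t z. t \<in> T \<Longrightarrow> z \<in> X \<Longrightarrow> norm (f t z) \<le> B"
    and "finite C" "C \<noteq> {}" and cover: "X \<subseteq> (\<Union>c\<in>C. ball c (\<delta> / 2))"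
    and near: "\<And>t z z'. t \<in> T \<Longrightarrow> z \<in> X \<Longrightarrow> z' \<in> X \<Longrightarrow> dist z z' < \<delta> \<Longrightarrow>
      dist (f t z) (f t z') < sqrt signal / 2"
    and close: "\<And>t z z'. t \<in> T \<Longrightarrow> z \<in> X \<Longrightarrow> z' \<in> X \<Longrightarrow> dist z z' < R \<Longrightarrow>
      dist (f t z) (f t z') < sqrt (signal / (32 * real (card C)))"
    and m: "2 * n_st + 4 * card C + 3 \<le> m" and "Y \<subseteq> X" "finite Y" "card Y < CARD('p)"
  shows "signal / (64 * real (card C) * B\<^sup>2) * real m < real (visits x m (- (\<Union>y\<in>Y. ball y R)))"
proof (rule ccontr)
  (* The constants make the perturbation and the far mass each contribute signal / (32 N) to a
     flat direction, so that max_sensitivity >= 16 N on the second half. *)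
  define N where "N = real (card C)"
  define Far where "Far = - (\<Union>y\<in>Y. ball y R)"
  obtain t where t: "m - m div 2 \<le> t" "t < m" and small: "max_sensitivity t < 16 * N"
    using max_sensitivity_small_in_second_half[OF \<open>finite C\<close> \<open>C \<noteq> {}\<close> cover near m]
    unfolding N_def by blast
  have "n_st \<le> t" "m \<le> 2 * t" using t m by auto
  assume few_far: "\<not> ?thesis"
  have "B\<^sup>2 * real (visits x t Far) \<le> B\<^sup>2 * real (visits x m Far)"
    using visits_mono[of t m x Far] \<open>t < m\<close> by (simp add: mult_left_mono)
  also have "\<dots> \<le> B\<^sup>2 * (signal / (64 * N * B\<^sup>2) * m)"
    using few_far by (intro mult_left_mono) (simp_all add: N_def Far_def not_less)
  also have "\<dots> = signal / (64 * N) * real m" using \<open>0 < B\<close> by (simp add: field_simps)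
  also have "\<dots> \<le> signal / (64 * N) * (2 * real t)"
    using \<open>m \<le> 2 * t\<close> signal_pos by (intro mult_left_mono) (simp_all add: N_def)
  finally have "B\<^sup>2 * real (visits x t Far) \<le> signal / (32 * N) * real t"
    by (simp add: ac_simps)
  then have "16 * N \<le> max_sensitivity t"
    using \<open>finite C\<close> \<open>C \<noteq> {}\<close> bounded[OF \<theta>_in_T] close[OF \<theta>_in_T] \<open>n_st \<le> t\<close>
    by (intro max_sensitivity_ge_of_few_far[OF \<open>n_st \<le> t\<close> _ \<open>finite Y\<close> \<open>card Y < CARD('p)\<close> \<open>Y \<subseteq> X\<close>])
      (simp_all add: Far_def N_def card_gt_0_iff)
  with small show False by linarith
qed

lemma eventually_far_mass_gt:
  obtains \<epsilon> R m0 where "0 < \<epsilon>" "0 < R" "n_st \<le> m0"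
    "\<And>m Y. m0 \<le> m \<Longrightarrow> Y \<subseteq> X \<Longrightarrow> finite Y \<Longrightarrow> card Y < CARD('p) \<Longrightarrow>
      \<epsilon> * real m < real (visits x m (- (\<Union>y\<in>Y. ball y R)))"
proof -
  have "compact ((\<lambda>(z, t). f t z) ` (X \<times> T))"
    by (rule compact_continuous_image[OF continuous_f compact_Times[OF compact_X compact_T]])
  then obtain B where "0 < B" and B: "\<And>v. v \<in> (\<lambda>(z, t). f t z) ` (X \<times> T) \<Longrightarrow> norm v \<le> B"
    using compact_imp_bounded bounded_pos by metis
  have bounded: "norm (f t z) \<le> B" if "t \<in> T" "z \<in> X" for t z
    using B[of "f t z"] that by force
  obtain \<delta> where "0 < \<delta>" and near: "\<And>t z z'. t \<in> T \<Longrightarrow> z \<in> X \<Longrightarrow> z' \<in> X \<Longrightarrow> dist z z' < \<delta> \<Longrightarrow>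
      dist (f t z) (f t z') < sqrt signal / 2"
    by (rule compact_uniformly_equicontinuous[OF compact_X compact_T continuous_f, of "sqrt signal / 2"])
      (use signal_pos in auto)
  obtain C where "finite C" "C \<subseteq> X" and cover: "X \<subseteq> (\<Union>c\<in>C. ball c (\<delta> / 2))"
    using compact_finite_ball_cover[OF compact_X] \<open>0 < \<delta>\<close> by (metis half_gt_zero)
  have "C \<noteq> {}" using cover X_nonempty by auto
  then have "0 < card C" using \<open>finite C\<close> by (simp add: card_gt_0_iff)
  obtain R where "0 < R" and close: "\<And>t z z'. t \<in> T \<Longrightarrow> z \<in> X \<Longrightarrow> z' \<in> X \<Longrightarrow> dist z z' < R \<Longrightarrow>
      dist (f t z) (f t z') < sqrt (signal / (32 * real (card C)))"
    by (rule compact_uniformly_equicontinuous[OF compact_X compact_T continuous_f,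
          of "sqrt (signal / (32 * real (card C)))"])
      (use signal_pos \<open>0 < card C\<close> in auto)
  show thesis
  proof (rule that[of "signal / (64 * real (card C) * B\<^sup>2)" R "2 * n_st + 4 * card C + 3"])
    show "0 < signal / (64 * real (card C) * B\<^sup>2)"
      using signal_pos \<open>0 < card C\<close> \<open>0 < B\<close> by simp
  qed (use \<open>0 < R\<close> far_mass_gt[OF \<open>0 < B\<close> bounded \<open>finite C\<close> \<open>C \<noteq> {}\<close> cover near close] in auto)
qed

end

theorem lemma2p3:
  fixes X :: "'a::metric_space set" and T :: "'b::metric_space set"
    and f :: "'b \<Rightarrow> 'a \<Rightarrow> real^'p"
    and x :: "nat \<Rightarrow> 'a" and \<theta> :: "nat \<Rightarrow> 'b" and n_st :: nat
  assumes "compact X" "X \<noteq> {}" "compact T" "T \<noteq> {}"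
    and "\<And>t. t \<in> T \<Longrightarrow> span (f t ` X) = UNIV"
    and "continuous_on (X \<times> T) (\<lambda>(z, t). f t z)"
    and "CARD('p) \<ge> 2"
    and "\<And>i. 1 \<le> i \<Longrightarrow> i \<le> n_st \<Longrightarrow> x i \<in> X"
    and "\<And>t. t \<in> T \<Longrightarrow> pos_def (info_matrix f (emp_design x n_st) t)"
    and "\<And>n. n \<ge> n_st \<Longrightarrow> \<theta> n \<in> T"
    and "\<And>n. n \<ge> n_st \<Longrightarrow> x (Suc n) \<in> X \<and>
          (\<forall>z\<in>X. f (\<theta> n) z \<bullet> (matrix_inv (info_matrix f (emp_design x n) (\<theta> n)) *v f (\<theta> n) z)
               \<le> f (\<theta> n) (x (Suc n)) \<bullet> (matrix_inv (info_matrix f (emp_design x n) (\<theta> n)) *v f (\<theta> n) (x (Suc n))))"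
  shows "\<exists>n0\<ge>n_st. \<exists>\<pi>0>0. \<exists>d0>0. \<forall>n\<ge>n0. \<exists>S :: 'p \<Rightarrow> 'a set.
           (\<forall>j. S j \<subseteq> X \<and> design_meas (emp_design x n) (S j) \<ge> \<pi>0 \<and> diameter (S j) \<le> d0)
         \<and> (\<forall>j k. j \<noteq> k \<longrightarrow> setdist (S j) (S k) \<ge> d0)"
proof -
  interpret sequential_design X T f x \<theta> n_st
    using assms(1-4,6,8-11) by unfold_locales
  obtain \<epsilon> R m0 where "0 < \<epsilon>" "0 < R" "n_st \<le> m0" and far: "\<And>m Y. m0 \<le> m \<Longrightarrow> Y \<subseteq> X \<Longrightarrow>
      finite Y \<Longrightarrow> card Y < CARD('p) \<Longrightarrow> \<epsilon> * real m < real (visits x m (- (\<Union>y\<in>Y. ball y R)))"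
    by (rule eventually_far_mass_gt) blast
  obtain C where C: "finite C" "C \<subseteq> X" "X \<subseteq> (\<Union>c\<in>C. ball c (R / 5))"
    using compact_finite_ball_cover[OF compact_X, of "R / 5"] \<open>0 < R\<close> by auto
  have "0 < real (card C)"
    using C X_nonempty by (auto simp: card_gt_0_iff)
  have "\<exists>S :: 'p \<Rightarrow> 'a set.
           (\<forall>j. S j \<subseteq> X \<and> design_meas (emp_design x n) (S j) \<ge> \<epsilon> / card C \<and> diameter (S j) \<le> 2 * (R / 5))
         \<and> (\<forall>j k. j \<noteq> k \<longrightarrow> setdist (S j) (S k) \<ge> 2 * (R / 5))" if "m0 \<le> n" for n
  proof (rule separated_heavy_balls[OF _ _ _ C x_in_X])
    fix Y :: "'a set" assume "Y \<subseteq> X" "finite Y" "card Y < CARD('p)"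
    then show "real (card C) * (\<epsilon> / card C) * real n < real (visits x n (- (\<Union>y\<in>Y. ball y (5 * (R / 5)))))"
      using far[OF that] \<open>0 < real (card C)\<close> by simp
  qed (use \<open>0 < R\<close> \<open>0 < \<epsilon>\<close> that \<open>n_st \<le> m0\<close> n_st_pos in auto)
  then show ?thesis
    using \<open>n_st \<le> m0\<close> \<open>0 < \<epsilon>\<close> \<open>0 < R\<close> \<open>0 < real (card C)\<close>
    by (intro exI[of _ m0] conjI exI[of _ "\<epsilon> / card C"] exI[of _ "2 * (R / 5)"]) auto
qed

end
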